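(* Consider the RETAS (renewal epidemic-type aftershock sequence) model described in the context, observed on $[0,T]\times\mathcal{S}\times\mathcal{M}$ with events $(\tau_i,x_i,y_i,m_i)$, $i=1,\dots,n$, $0<\tau_1<\dots<\tau_n\le T$, and write $s_i=(x_i,y_i)$. Define $d_1=\mu(\tau_1)\nu(s_1)\exp\!\big(-\int_0^{\tau_1}\mu(t)\,\mathrm{d}t\big)$; for $i=2,\dots,n$ and $j=1,\dots,i-1$, $S_{ij}=\exp\!\big(-\int_{\tau_{i-1}}^{\tau_i}\mu(t-\tau_j)\,\mathrm{d}t\big)$ and $d_{ij}=\big(\mu(\tau_i-\tau_j)\nu(s_i)+\phi(\tau_i,s_i)\big)S_{ij}$; for $j=1,\dots,n$, $S_{n+1,j}=\exp\!\big(-\int_{\tau_n}^{T}\mu(t-\tau_j)\,\mathrm{d}t\big)$; and $\Phi(T)=\int_0^T\iint_{\mathcal{S}}\phi(t,x,y)\,\mathrm{d}x\,\mathrm{d}y\,\mathrm{d}t=\sum_{j=1}^n\kappa(m_j)\int_{\tau_j}^T g(t-\tau_j)\,\mathrm{d}t\iint_{\mathcal{S}}f(x-x_j,y-y_j)\,\mathrm{d}x\,\mathrm{d}y$. Let $p_{ij}=\mathbb{P}(I(\tau_i)=j\mid\mathcal{H}_{\tau_i-})$ for $2\le i\le n$, and $p_{n+1,j}=\mathbb{P}(I(\tau_{n+1})=j\mid \mathcal{H}_T)$, where $\tau_{n+1}$ is the first event time after $T$. Then the log-likelihood of the observed data is $$\ell(\theta)=\log d_1+\sum_{i=2}^n\log\Big(\sum_{j=1}^{i-1}p_{ij}d_{ij}\Big)+\log\Big(\sum_{j=1}^n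 p_{n+1,j}S_{n+1,j}\Big)-\Phi(T)+\sum_{j=1}^n\log J(m_j),$$ and the probabilities $p_{ij}$ are computed recursively from $p_{21}=1$ by, for $i\ge 3$, $$p_{ij}=\frac{p_{i-1,j}\,\phi(\tau_{i-1},s_{i-1})\,S_{i-1,j}}{\sum_{k=1}^{i-2}p_{i-1,k}d_{i-1,k}},\quad j=1,\dots,i-2,\qquad p_{i,i-1}=1-\sum_{k=1}^{i-2}p_{ik}.$$
   Context: The RETAS model is a marked spatiotemporal point process of earthquakes $(\tau_i,x_i,y_i,m_i)_{i\ge1}$ (time, location in $\mathcal{S}\subset\mathbb{R}^2$, magnitude in $\mathcal{M}\subset\mathbb{R}$). Let $\mathcal{H}_t=\sigma\{(\tau_i,x_i,y_i,m_i):\tau_i\le t\}$ be the internal history. Each event carries an unobserved indicator $B_i\in\{0,1\}$ ($B_i=0$: main-shock, $B_i=1$: aftershock); $I(t)=\max\{i:\tau_i<t,B_i=0\}$ is the index of the most recent main-shock before $t$, with $I(t)=0$ for $t\le\tau_1$ and $\tau_0=0$. It is assumed there are no events before time $0$ and the first event is a main-shock. With respect to the extended history $\tilde{\mathcal{H}}_t=\sigma(\mathcal{H}_t\cup\{I(s):s\le t\})$, the conditional intensity is $\lambda(t,x,y,m)=\tilde\lambda_g(t,x,y)J(m)$ with ground intensity $$\tilde\lambda_g(t,x,y)=\mu(t-\tau_{I(t)})\nu(x,y)+\phi(t,x,y),\qquad \phi(t,x,y)=\sum_{i:\tau_i<t}\kappa(m_i)g(t-\tau_i)f(x-x_i,y-y_i).$$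 Here $\mu\ge0$ is the hazard function of the i.i.d. waiting times between consecutive main-shocks (so main-shock times form a renewal process), with $\int_0^\infty\exp(-\int_0^t\mu(s)\,\mathrm{d}s)\,\mathrm{d}t<\infty$; $\nu\ge0$ is a density on $\mathcal{S}$ (integrating to 1) for main-shock locations; $g\ge0$ is a probability density on $[0,\infty)$ (temporal response); $f\ge0$ is a probability density on $\mathbb{R}^2$ (spatial response); $\kappa(m)\ge0$ is the mean number of aftershocks directly triggered by an event of magnitude $m$; and magnitudes are i.i.d. with density $J$, independent of times, locations, and the past. $\theta$ denotes the vector of all model parameters on which $\mu,\nu,g,f,\kappa,J$ depend. The log-likelihood is that of the observed data $(\tau_i,s_i,m_i)_{i=1}^n$ on $[0,T]$. *)

theory Defs
  imports "HOL-Analysis.Analysis"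
begin

record retas_model =
  mu    :: "real \<Rightarrow> real"              (* hazard of main-shock waiting times *)
  nu    :: "real \<times> real \<Rightarrow> real"     (* main-shock location density on S *)
  gg    :: "real \<Rightarrow> real"              (* temporal response density on [0,oo) *)
  ff    :: "real \<times> real \<Rightarrow> real"     (* spatial response density on R^2 *)
  kap   :: "real \<Rightarrow> real"              (* productivity kappa(m) *)
  JJ    :: "real \<Rightarrow> real"              (* magnitude density J *)

text \<open>Observed data: events i = 1..nn with times tt i, locations ss i, magnitudes mm i,
  observation window [0, TT].  The convention tau_0 = 0 is imposed as a hypothesis.\<close>
record retas_data =
  tt :: "nat \<Rightarrow> real"
  ss :: "nat \<Rightarrow> real \<times> real"
  mm :: "nat \<Rightarrow> real"
  nn :: nat
  TT :: real

definition phi :: "retas_model \<Rightarrow> retas_data \<Rightarrow> real \<Rightarrow> real \<times> real \<Rightarrow> real" where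
  "phi P D t p = (\<Sum>i | i \<in> {1..nn D} \<and> tt D i < t.
      kap P (mm D i) * gg P (t - tt D i) * ff P (p - ss D i))"

text \<open>Index I(t) of the most recent main-shock before t, for a set A of main-shock indices
  (0 if there is none).\<close>
definition mainIdx :: "retas_data \<Rightarrow> nat set \<Rightarrow> real \<Rightarrow> nat" where
  "mainIdx D A t = Max (insert 0 {i \<in> A. tt D i < t})"

text \<open>Admissible main-shock index sets for the first k events (event 1 is a main-shock).\<close>
definition labels :: "nat \<Rightarrow> nat set set" where
  "labels k = {A. A \<subseteq> {1..k} \<and> 1 \<in> A}"

text \<open>Ground intensity of event l under the complete (labelled) data.\<close>
definition fac :: "retas_model \<Rightarrow> retas_data \<Rightarrow> nat set \<Rightarrow> nat \<Rightarrow> real" where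
  "fac P D A l = (if l \<in> A
      then mu P (tt D l - tt D (mainIdx D A (tt D l))) * nu P (ss D l)
      else phi P D (tt D l) (ss D l))"

definition Phi :: "retas_model \<Rightarrow> retas_data \<Rightarrow> (real \<times> real) set \<Rightarrow> real \<Rightarrow> nat \<Rightarrow> real" where
  "Phi P D Sp u k = (\<Sum>j = 1..k. kap P (mm D j) * integral {tt D j..u} (\<lambda>t. gg P (t - tt D j))
        * integral Sp (\<lambda>p. ff P (p - ss D j)))"

definition Lam0 :: "retas_model \<Rightarrow> retas_data \<Rightarrow> (real \<times> real) set \<Rightarrow> nat set \<Rightarrow> real \<Rightarrow> real" where
  "Lam0 P D Sp A u = integral {0..u} (\<lambda>t. mu P (t - tt D (mainIdx D A t))) * integral Sp (nu P)"

definition Lcomp :: "retas_model \<Rightarrow> retas_data \<Rightarrow> (real \<times> real) set \<Rightarrow> nat \<Rightarrow> real \<Rightarrow> nat set \<Rightarrow> real" where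
  "Lcomp P D Sp k u A = (\<Prod>l = 1..k. fac P D A l * JJ P (mm D l))
      * exp (- (Lam0 P D Sp A u + Phi P D Sp u k))"

text \<open>Likelihood of the observed data on [0,T]: complete-data likelihood marginalised over
  the unobserved main-shock/aftershock labels; log-likelihood ell(theta).\<close>
definition obsLik :: "retas_model \<Rightarrow> retas_data \<Rightarrow> (real \<times> real) set \<Rightarrow> real" where
  "obsLik P D Sp = (\<Sum>A \<in> labels (nn D). Lcomp P D Sp (nn D) (TT D) A)"

definition loglik :: "retas_model \<Rightarrow> retas_data \<Rightarrow> (real \<times> real) set \<Rightarrow> real" where
  "loglik P D Sp = ln (obsLik P D Sp)"

text \<open>p_{ij} = P(I(tau_i) = j | history of events 1..i-1), for 2 <= i <= n+1: the posterior of
  the labels of events 1..i-1 given the data up to tau_{i-1}.  Given main-shock set A of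
  events 1..i-1, I(tau_i) = Max A.\<close>
definition pp :: "retas_model \<Rightarrow> retas_data \<Rightarrow> (real \<times> real) set \<Rightarrow> nat \<Rightarrow> nat \<Rightarrow> real" where
  "pp P D Sp i j =
     (\<Sum>A | A \<in> labels (i - 1) \<and> Max A = j. Lcomp P D Sp (i - 1) (tt D (i - 1)) A)
     / (\<Sum>A \<in> labels (i - 1). Lcomp P D Sp (i - 1) (tt D (i - 1)) A)"

definition d1 :: "retas_model \<Rightarrow> retas_data \<Rightarrow> real" where
  "d1 P D = mu P (tt D 1) * nu P (ss D 1) * exp (- integral {0..tt D 1} (mu P))"

definition Ssurv :: "retas_model \<Rightarrow> retas_data \<Rightarrow> nat \<Rightarrow> nat \<Rightarrow> real" where
  "Ssurv P D i j = exp (- integral {tt D (i - 1)..tt D i} (\<lambda>t. mu P (t - tt D j)))"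

definition dd :: "retas_model \<Rightarrow> retas_data \<Rightarrow> nat \<Rightarrow> nat \<Rightarrow> real" where
  "dd P D i j = (mu P (tt D i - tt D j) * nu P (ss D i) + phi P D (tt D i) (ss D i)) * Ssurv P D i j"

definition Send :: "retas_model \<Rightarrow> retas_data \<Rightarrow> nat \<Rightarrow> real" where
  "Send P D j = exp (- integral {tt D (nn D)..TT D} (\<lambda>t. mu P (t - tt D j)))"

end

theory Submission
  imports Defs
begin

(* Summing the complete-data likelihood over the unobserved labels, the factors J(m_l) and
   exp(-Phi) do not depend on the labels.  The remaining factor of a labelling of events 1..k,
   evaluated at tau_k, changes in a simple way when event k+1 is added: it is multiplied by
   S_{k+1,j}, where j is the latest main-shock, and by phi(tau_{k+1}, s_{k+1}) or by
   mu(tau_{k+1} - tau_j) nu(s_{k+1}) according as event k+1 is an aftershock or a main-shock.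
   Grouping labellings by their latest main-shock j gives forward quantities alpha_k(j) with
   p_{k+1,j} = alpha_k(j) / sum_j alpha_k(j).  The recursion for alpha is the recursion for p,
   and the normalising constants telescope into the product of the one-step predictive
   likelihoods sum_j p_{ij} d_{ij}, exactly as in the forward algorithm for hidden Markov models. *)

lemma integrable_on_shift:
  fixes f :: "real \<Rightarrow> 'a::banach"
  assumes "\<And>b. f integrable_on {0..b}" "c \<le> a"
  shows "(\<lambda>x. f (x - c)) integrable_on {a..b}"
proof -
  have "f integrable_on {a - c..b - c}"
    using integrable_on_subinterval[OF assms(1)[of "b - c"]] assms(2)
    by (cases "a \<le> b") auto
  then obtain i where "(f has_integral i) (cbox (a - c) (b - c))" by auto
  from has_integral_affinity'[OF this, of 1 "- c"]
  have "((\<lambda>x. f (x - c)) has_integral i) (cbox a b)" by simp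
  then show ?thesis by auto
qed

lemma ln_telescope:
  fixes Y :: "nat \<Rightarrow> real"
  assumes "1 \<le> n" "\<And>i. 1 \<le> i \<Longrightarrow> i \<le> n \<Longrightarrow> 0 < Y i"
  shows "ln (Y n) = ln (Y 1) + (\<Sum>i = 2..n. ln (Y i / Y (i - 1)))"
proof -
  have "(\<Sum>i = 2..n. ln (Y i / Y (i - 1))) = (\<Sum>i = 2..n. ln (Y i) - ln (Y (i - 1)))"
  proof (intro sum.cong refl)
    fix i assume "i \<in> {2..n}"
    then have "0 < Y i" "0 < Y (i - 1)" using assms(2) by auto
    then show "ln (Y i / Y (i - 1)) = ln (Y i) - ln (Y (i - 1))" by (rule ln_divide_pos)
  qed
  also have "\<dots> = (\<Sum>i = 1..n - 1. ln (Y (Suc i)) - ln (Y i))"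
    using assms(1) sum.shift_bounds_cl_Suc_ivl[of "\<lambda>i. ln (Y i) - ln (Y (i - 1))" 1 "n - 1"]
    by (simp add: numeral_2_eq_2)
  also have "\<dots> = ln (Y n) - ln (Y 1)"
    using assms(1) by (subst sum_Suc_diff) auto
  finally show ?thesis by simp
qed

section \<open>Labellings\<close>

lemma labels_finite: "finite (labels k)"
  unfolding labels_def by (rule finite_subset[of _ "Pow {1..k}"]) auto

lemma labelsD:
  assumes "A \<in> labels k"
  shows "finite A" "Max A \<in> A" "1 \<le> Max A" "Max A \<le> k" "A \<subseteq> {1..k}"
proof -
  have A: "A \<subseteq> {1..k}" "1 \<in> A" using assms unfolding labels_def by auto
  show fin: "finite A" using A finite_subset by blast
  show "Max A \<in> A" using fin A by (intro Max_in) auto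
  then show "1 \<le> Max A" "Max A \<le> k" using A by auto
  show "A \<subseteq> {1..k}" using A by auto
qed

lemma labels_1: "labels 1 = {{1}}"
  unfolding labels_def by auto

lemma labels_Suc:
  assumes "1 \<le> m"
  shows "labels (Suc m) = labels m \<union> insert (Suc m) ` labels m"
proof
  show "labels (Suc m) \<subseteq> labels m \<union> insert (Suc m) ` labels m"
  proof
    fix A assume A: "A \<in> labels (Suc m)"
    show "A \<in> labels m \<union> insert (Suc m) ` labels m"
    proof (cases "Suc m \<in> A")
      case True
      then have "A = insert (Suc m) (A - {Suc m})" by auto
      moreover have "A - {Suc m} \<in> labels m" using A assms unfolding labels_def by auto
      ultimately show ?thesis by blast
    next
      case False
      then have "A \<in> labels m" using A unfolding labels_def by (auto simp: le_Suc_eq)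
      then show ?thesis by blast
    qed
  qed
qed (use assms in \<open>auto simp: labels_def\<close>)

lemma sum_labels_Suc:
  assumes "1 \<le> m"
  shows "(\<Sum>A\<in>labels (Suc m). F A) = (\<Sum>A\<in>labels m. F A + F (insert (Suc m) A))"
proof -
  have disj: "labels m \<inter> insert (Suc m) ` labels m = {}"
    unfolding labels_def by auto
  have inj: "inj_on (insert (Suc m)) (labels m)"
  proof (rule inj_onI)
    fix A B assume "A \<in> labels m" "B \<in> labels m" "insert (Suc m) A = insert (Suc m) B"
    moreover have "Suc m \<notin> A" "Suc m \<notin> B" using calculation unfolding labels_def by auto
    ultimately show "A = B" by (metis Diff_insert_absorb)
  qed
  have "(\<Sum>A\<in>labels (Suc m). F A) = (\<Sum>A\<in>labels m. F A) + (\<Sum>A\<in>insert (Suc m) ` labels m. F A)"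
    unfolding labels_Suc[OF assms] using disj labels_finite by (intro sum.union_disjoint) auto
  also have "(\<Sum>A\<in>insert (Suc m) ` labels m. F A) = (\<Sum>A\<in>labels m. F (insert (Suc m) A))"
    using inj by (simp add: sum.reindex)
  finally show ?thesis by (simp add: sum.distrib)
qed

lemma labels_Int_lessThan_Suc:
  assumes "A \<in> labels (Suc m)" "1 \<le> m"
  shows "A \<inter> {..<Suc m} \<in> labels m"
  using assms unfolding labels_def by auto

lemma labels_Max_Suc:
  assumes "j \<le> m"
  shows "{A \<in> labels (Suc m). Max A = j} = {A \<in> labels m. Max A = j}"
proof (intro equalityI subsetI)
  fix A assume "A \<in> {A \<in> labels (Suc m). Max A = j}"
  then have L: "A \<in> labels (Suc m)" and M: "Max A = j" by auto
  have "x \<le> m" if "x \<in> A" for x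
    using Max_ge[OF labelsD(1)[OF L] that] M assms by simp
  then show "A \<in> {A \<in> labels m. Max A = j}" using L M unfolding labels_def by auto
qed (auto simp: labels_def)

lemma sum_labels_by_Max:
  fixes F :: "nat set \<Rightarrow> 'a::comm_semiring_1"
  shows "(\<Sum>A\<in>labels m. F A * G (Max A)) = (\<Sum>j = 1..m. G j * (\<Sum>A | A \<in> labels m \<and> Max A = j. F A))"
proof -
  have "(\<Sum>A\<in>labels m. F A * G (Max A)) = (\<Sum>j = 1..m. \<Sum>A | A \<in> labels m \<and> Max A = j. F A * G (Max A))"
    by (rule sum.group[symmetric]) (use labels_finite labelsD(3,4) in auto)
  also have "\<dots> = (\<Sum>j = 1..m. G j * (\<Sum>A | A \<in> labels m \<and> Max A = j. F A))"
    by (intro sum.cong refl) (simp add: sum_distrib_left mult.commute)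
  finally show ?thesis .
qed

section \<open>The label-dependent factor of the complete-data likelihood\<close>

locale retas_sample =
  fixes P :: retas_model and D :: retas_data and Sp :: "(real \<times> real) set"
  assumes n_pos: "1 \<le> nn D"
    and tau0: "tt D 0 = 0"
    and tau1_pos: "0 < tt D 1"
    and tau_mono: "\<And>i. 1 \<le> i \<Longrightarrow> i < nn D \<Longrightarrow> tt D i < tt D (Suc i)"
    and s_in: "\<And>i. 1 \<le> i \<Longrightarrow> i \<le> nn D \<Longrightarrow> ss D i \<in> Sp"
    and mu_nonneg: "\<And>t. 0 \<le> t \<Longrightarrow> 0 \<le> mu P t"
    and mu_locint: "\<And>b. mu P integrable_on {0..b}"
    and nu_nonneg: "\<And>p. p \<in> Sp \<Longrightarrow> 0 \<le> nu P p"
    and nu_dens: "(nu P has_integral 1) Sp"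
    and g_nonneg: "\<And>t. 0 \<le> t \<Longrightarrow> 0 \<le> gg P t"
    and f_nonneg: "\<And>p. 0 \<le> ff P p"
    and kappa_nonneg: "\<And>x. 0 \<le> kap P x"
begin

lemma tt_less: "a < b \<Longrightarrow> b \<le> nn D \<Longrightarrow> tt D a < tt D b"
proof (induction b)
  case (Suc b)
  have "tt D b < tt D (Suc b)"
    using tau0 tau1_pos tau_mono[of b] Suc.prems by (cases "b = 0") auto
  then show ?case using Suc by (cases "a = b") auto
qed simp

lemma tt_mono: "a \<le> b \<Longrightarrow> b \<le> nn D \<Longrightarrow> tt D a \<le> tt D b"
  using tt_less[of a b] by (cases "a = b") auto

lemma tt_nonneg: "i \<le> nn D \<Longrightarrow> 0 \<le> tt D i"
  using tt_mono[of 0 i] tau0 by simp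

lemma mainIdx_after:
  assumes "A \<in> labels k" "k \<le> nn D" "tt D k < x"
  shows "mainIdx D A x = Max A"
proof -
  have "{i \<in> A. tt D i < x} = A"
    using labelsD(5)[OF assms(1)] tt_mono[of _ k] assms by force
  moreover have "A \<noteq> {}" using labelsD(2)[OF assms(1)] by auto
  ultimately show ?thesis unfolding mainIdx_def
    using labelsD[OF assms(1)] by (simp add: Max_insert max_def)
qed

lemma mainIdx_restrict:
  assumes "B \<subseteq> {1..nn D}" "k \<le> nn D" "x \<le> tt D k"
  shows "mainIdx D B x = mainIdx D (B \<inter> {..<k}) x"
proof -
  have "i < k" if "i \<in> B" "tt D i < x" for i
    using that assms tt_mono[of k i] by (cases "i < k") auto
  then have "{i \<in> B. tt D i < x} = {i \<in> B \<inter> {..<k}. tt D i < x}" by auto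
  then show ?thesis unfolding mainIdx_def by simp
qed

lemma tt_mainIdx_le:
  assumes "finite A" "0 \<le> x"
  shows "tt D (mainIdx D A x) \<le> x"
proof -
  have "mainIdx D A x \<in> insert 0 {i \<in> A. tt D i < x}"
    unfolding mainIdx_def using assms(1) by (intro Max_in) auto
  then show ?thesis using assms(2) tau0 by auto
qed

lemma mainIdx_1: "x \<le> tt D 1 \<Longrightarrow> mainIdx D {1} x = 0"
proof -
  assume "x \<le> tt D 1"
  then have empty: "{i \<in> {1}. tt D i < x} = {}" by auto
  show ?thesis unfolding mainIdx_def empty by simp
qed

definition main_hazard :: "nat set \<Rightarrow> real \<Rightarrow> real" where
  "main_hazard A x = mu P (x - tt D (mainIdx D A x))"

lemma Lam0_eq_integral: "Lam0 P D Sp A u = integral {0..u} (main_hazard A)"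
proof -
  have "integral Sp (nu P) = 1" using nu_dens by (rule integral_unique)
  then show ?thesis unfolding Lam0_def main_hazard_def[abs_def] by simp
qed

lemma main_hazard_restrict:
  "B \<subseteq> {1..nn D} \<Longrightarrow> k \<le> nn D \<Longrightarrow> x \<le> tt D k \<Longrightarrow> main_hazard B x = main_hazard (B \<inter> {..<k}) x"
  using mainIdx_restrict by (simp add: main_hazard_def)

lemma main_hazard_tail:
  assumes "A \<in> labels k" "k \<le> nn D"
  shows "main_hazard A integrable_on {tt D k..u}"
    and "integral {tt D k..u} (main_hazard A) = integral {tt D k..u} (\<lambda>x. mu P (x - tt D (Max A)))"
proof -
  \<comment> \<open>at \<open>x = tt D k\<close> itself the latest main-shock may be an earlier one\<close>
  have eq: "main_hazard A x = mu P (x - tt D (Max A))" if "x \<in> {tt D k..u} - {tt D k}" for x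
    using that mainIdx_after[OF assms] by (simp add: main_hazard_def)
  have "tt D (Max A) \<le> tt D k" using tt_mono labelsD(4)[OF assms(1)] assms(2) by simp
  then show "main_hazard A integrable_on {tt D k..u}"
    using integrable_spike[OF integrable_on_shift[OF mu_locint] negligible_sing eq] by simp
  show "integral {tt D k..u} (main_hazard A) = integral {tt D k..u} (\<lambda>x. mu P (x - tt D (Max A)))"
    using eq by (intro integral_spike[OF negligible_sing[of "tt D k"]]) auto
qed

lemma main_hazard_integrable:
  "1 \<le> k \<Longrightarrow> k \<le> nn D \<Longrightarrow> A \<in> labels k \<Longrightarrow> main_hazard A integrable_on {0..tt D k}"
proof (induction k arbitrary: A)
  case (Suc m)
  show ?case
  proof (cases "m = 0")
    case True
    then have "A = {1}" using Suc.prems labels_1 by auto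
    then have "mu P x = main_hazard A x" if "x \<in> {0..tt D (Suc m)}" for x
      using that True tau0 mainIdx_1 by (simp add: main_hazard_def)
    then show ?thesis by (rule integrable_eq[OF mu_locint])
  next
    case False
    define B where "B = A \<inter> {..<Suc m}"
    have B: "B \<in> labels m"
      unfolding B_def using labels_Int_lessThan_Suc Suc.prems False by simp
    have "main_hazard B integrable_on {0..tt D m}" using Suc.IH[OF _ _ B] Suc.prems False by simp
    moreover have "main_hazard B integrable_on {tt D m..tt D (Suc m)}"
      using main_hazard_tail(1)[OF B] Suc.prems by simp
    ultimately have "main_hazard B integrable_on {0..tt D (Suc m)}"
      using Henstock_Kurzweil_Integration.integrable_combine[OF tt_nonneg tt_mono[of m "Suc m"]] Suc.prems
      by simp
    moreover have "main_hazard B x = main_hazard A x" if "x \<in> {0..tt D (Suc m)}" for x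
    proof -
      have "A \<subseteq> {1..nn D}" using labelsD(5)[OF Suc.prems(3)] Suc.prems(2) by auto
      then show ?thesis using main_hazard_restrict[of A "Suc m" x] Suc.prems(2) that by (simp add: B_def)
    qed
    ultimately show ?thesis using integrable_eq by blast
  qed
qed simp

lemma Lam0_split:
  assumes "A \<in> labels k" "1 \<le> k" "k \<le> nn D" "tt D k \<le> u"
  shows "Lam0 P D Sp A u = Lam0 P D Sp A (tt D k) + integral {tt D k..u} (\<lambda>x. mu P (x - tt D (Max A)))"
proof -
  have int: "main_hazard A integrable_on {0..u}"
    using Henstock_Kurzweil_Integration.integrable_combine[OF tt_nonneg[OF assms(3)] assms(4)
        main_hazard_integrable[OF assms(2,3,1)] main_hazard_tail(1)[OF assms(1,3)]] .
  have "integral {0..u} (main_hazard A)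
      = integral {0..tt D k} (main_hazard A) + integral {tt D k..u} (main_hazard A)"
    using Henstock_Kurzweil_Integration.integral_combine[OF tt_nonneg[OF assms(3)] assms(4) int] by simp
  then show ?thesis unfolding Lam0_eq_integral main_hazard_tail(2)[OF assms(1,3)] .
qed

lemma Lam0_restrict:
  assumes "B \<subseteq> {1..nn D}" "k \<le> nn D" "u \<le> tt D k"
  shows "Lam0 P D Sp B u = Lam0 P D Sp (B \<inter> {..<k}) u"
  unfolding Lam0_eq_integral using main_hazard_restrict[OF assms(1,2)] assms(3)
  by (intro integral_cong) simp

lemma fac_restrict:
  assumes "B \<subseteq> {1..nn D}" "l < k" "k \<le> nn D"
  shows "fac P D B l = fac P D (B \<inter> {..<k}) l"
  using mainIdx_restrict[OF assms(1,3) tt_mono[of l k]] assms by (simp add: fac_def)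

definition label_lik :: "nat \<Rightarrow> real \<Rightarrow> nat set \<Rightarrow> real" where
  "label_lik k u A = (\<Prod>l = 1..k. fac P D A l) * exp (- Lam0 P D Sp A u)"

lemma Lcomp_eq_label_lik:
  "Lcomp P D Sp k u A = ((\<Prod>l = 1..k. JJ P (mm D l)) * exp (- Phi P D Sp u k)) * label_lik k u A"
  unfolding Lcomp_def label_lik_def prod.distrib minus_add_distrib exp_add by (simp only: mult_ac)

lemma label_lik_Suc:
  assumes m: "1 \<le> m" "Suc m \<le> nn D" and A: "A \<in> labels m"
    and B: "B \<subseteq> {1..nn D}" "B \<inter> {..<Suc m} = A"
  shows "label_lik (Suc m) (tt D (Suc m)) B
           = label_lik m (tt D m) A * fac P D B (Suc m) * Ssurv P D (Suc m) (Max A)"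
proof -
  have "fac P D B l = fac P D A l" if "l \<in> {1..m}" for l
    using fac_restrict[OF B(1) _ m(2), of l] that unfolding B(2) by simp
  then have "(\<Prod>l = 1..m. fac P D B l) = (\<Prod>l = 1..m. fac P D A l)"
    by (rule prod.cong[OF refl])
  then have prod: "(\<Prod>l = 1..Suc m. fac P D B l) = (\<Prod>l = 1..m. fac P D A l) * fac P D B (Suc m)"
    by (simp add: prod.cl_ivl_Suc)
  have "Lam0 P D Sp B (tt D (Suc m)) = Lam0 P D Sp A (tt D (Suc m))"
    using Lam0_restrict[OF B(1) m(2) order.refl] unfolding B(2) .
  also have "\<dots> = Lam0 P D Sp A (tt D m) + integral {tt D m..tt D (Suc m)} (\<lambda>x. mu P (x - tt D (Max A)))"
    by (rule Lam0_split[OF A m(1)]) (use m tt_mono[of m "Suc m"] in auto)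
  finally have Lam0: "Lam0 P D Sp B (tt D (Suc m)) = \<dots>" .
  show ?thesis
    unfolding label_lik_def prod Lam0 Ssurv_def diff_Suc_1 minus_add_distrib exp_add by (simp only: mult_ac)
qed

lemma fac_Suc_aftershock:
  assumes "A \<in> labels m"
  shows "fac P D A (Suc m) = phi P D (tt D (Suc m)) (ss D (Suc m))"
proof -
  have "Suc m \<notin> A" using labelsD(5)[OF assms] by auto
  then show ?thesis unfolding fac_def by simp
qed

lemma fac_Suc_mainshock:
  assumes m: "1 \<le> m" "Suc m \<le> nn D" and A: "A \<in> labels m"
  shows "fac P D (insert (Suc m) A) (Suc m) = mu P (tt D (Suc m) - tt D (Max A)) * nu P (ss D (Suc m))"
proof -
  have "insert (Suc m) A \<subseteq> {1..nn D}" "insert (Suc m) A \<inter> {..<Suc m} = A"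
    using labelsD(5)[OF A] m by auto
  then have "mainIdx D (insert (Suc m) A) (tt D (Suc m)) = mainIdx D A (tt D (Suc m))"
    using mainIdx_restrict[OF _ m(2) order.refl] by metis
  also have "\<dots> = Max A" using mainIdx_after[OF A] m tt_less[of m "Suc m"] by simp
  finally show ?thesis unfolding fac_def by simp
qed

lemma label_lik_TT:
  assumes "A \<in> labels (nn D)" "tt D (nn D) \<le> TT D"
  shows "label_lik (nn D) (TT D) A = label_lik (nn D) (tt D (nn D)) A * Send P D (Max A)"
  unfolding label_lik_def Lam0_split[OF assms(1) n_pos order.refl assms(2)] Send_def
  by (simp only: minus_add_distrib exp_add mult_ac)

lemma label_lik_1: "label_lik 1 (tt D 1) {1} = d1 P D"
proof -
  have "main_hazard {1} x = mu P x" "fac P D {1} 1 = mu P (tt D 1) * nu P (ss D 1)"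
    if "x \<le> tt D 1" for x
    using that tau0 mainIdx_1 by (auto simp: main_hazard_def fac_def)
  then have "integral {0..tt D 1} (main_hazard {1}) = integral {0..tt D 1} (mu P)"
    "fac P D {1} 1 = mu P (tt D 1) * nu P (ss D 1)"
    by (auto intro: integral_cong)
  then show ?thesis unfolding label_lik_def d1_def Lam0_eq_integral by simp
qed

lemma phi_nonneg: "0 \<le> phi P D x p"
  unfolding phi_def
  by (intro sum_nonneg mult_nonneg_nonneg kappa_nonneg g_nonneg f_nonneg) auto

lemma fac_nonneg:
  assumes "finite A" "1 \<le> l" "l \<le> nn D"
  shows "0 \<le> fac P D A l"
  using tt_mainIdx_le[OF assms(1) tt_nonneg[OF assms(3)]] nu_nonneg[OF s_in] assms
  by (auto simp: fac_def phi_nonneg intro!: mult_nonneg_nonneg mu_nonneg)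

lemma label_lik_nonneg: "A \<in> labels k \<Longrightarrow> k \<le> nn D \<Longrightarrow> 0 \<le> label_lik k u A"
  unfolding label_lik_def using fac_nonneg labelsD(1)
  by (intro mult_nonneg_nonneg prod_nonneg) auto

section \<open>Forward recursion\<close>

text \<open>Up to the label-independent factor, \<open>forward k j\<close> is the joint likelihood of the events
  1..k observed on [0, tau_k] and of I(tau_{k+1}) = j, and \<open>evidence k\<close> is that of the events alone.\<close>

definition forward :: "nat \<Rightarrow> nat \<Rightarrow> real" where
  "forward k j = (\<Sum>A | A \<in> labels k \<and> Max A = j. label_lik k (tt D k) A)"

definition evidence :: "nat \<Rightarrow> real" where
  "evidence k = (\<Sum>A\<in>labels k. label_lik k (tt D k) A)"

lemma evidence_eq_sum_forward: "evidence k = (\<Sum>j = 1..k. forward k j)"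
  using sum_labels_by_Max[where F="\<lambda>A. label_lik k (tt D k) A" and m=k and G="\<lambda>_. 1"]
  unfolding evidence_def forward_def by simp

lemma evidence_1: "evidence 1 = d1 P D"
  unfolding evidence_def labels_1 using label_lik_1 by simp

lemma evidence_Suc_labels:
  assumes m: "1 \<le> m" "Suc m \<le> nn D"
  shows "evidence (Suc m) = (\<Sum>A\<in>labels m. label_lik m (tt D m) A * dd P D (Suc m) (Max A))"
  unfolding evidence_def sum_labels_Suc[OF m(1)]
proof (intro sum.cong refl)
  fix A assume A: "A \<in> labels m"
  have "A \<subseteq> {1..nn D}" "insert (Suc m) A \<subseteq> {1..nn D}"
    "A \<inter> {..<Suc m} = A" "insert (Suc m) A \<inter> {..<Suc m} = A"
    using labelsD(5)[OF A] m by auto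
  then show "label_lik (Suc m) (tt D (Suc m)) A + label_lik (Suc m) (tt D (Suc m)) (insert (Suc m) A)
        = label_lik m (tt D m) A * dd P D (Suc m) (Max A)"
    using label_lik_Suc[OF m A] fac_Suc_aftershock[OF A] fac_Suc_mainshock[OF m A]
    by (simp add: dd_def algebra_simps)
qed

lemma evidence_Suc:
  "1 \<le> m \<Longrightarrow> Suc m \<le> nn D \<Longrightarrow> evidence (Suc m) = (\<Sum>j = 1..m. dd P D (Suc m) j * forward m j)"
  unfolding evidence_Suc_labels sum_labels_by_Max forward_def ..

lemma forward_Suc:
  assumes m: "1 \<le> m" "Suc m \<le> nn D" and j: "j \<le> m"
  shows "forward (Suc m) j = phi P D (tt D (Suc m)) (ss D (Suc m)) * Ssurv P D (Suc m) j * forward m j"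
proof -
  have "label_lik (Suc m) (tt D (Suc m)) A
      = phi P D (tt D (Suc m)) (ss D (Suc m)) * Ssurv P D (Suc m) j * label_lik m (tt D m) A"
    if "A \<in> labels m" "Max A = j" for A
  proof -
    have "A \<subseteq> {1..nn D}" "A \<inter> {..<Suc m} = A" using labelsD(5)[OF that(1)] m by auto
    then show ?thesis
      using label_lik_Suc[OF m that(1)] fac_Suc_aftershock[OF that(1)] that(2) by (simp add: mult_ac)
  qed
  then show ?thesis
    unfolding forward_def labels_Max_Suc[OF j] sum_distrib_left by (intro sum.cong) auto
qed

lemma evidence_nonneg: "k \<le> nn D \<Longrightarrow> 0 \<le> evidence k"
  unfolding evidence_def by (intro sum_nonneg label_lik_nonneg) auto

lemma label_lik_eq_0_if_evidence:
  assumes "evidence k = 0" "k \<le> nn D" "A \<in> labels k"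
  shows "label_lik k u A = 0"
proof -
  have "label_lik k (tt D k) A = 0"
    using assms sum_nonneg_eq_0_iff[OF labels_finite] label_lik_nonneg unfolding evidence_def by blast
  then show ?thesis unfolding label_lik_def by simp
qed

lemma evidence_eq_0_propagates:
  assumes "evidence k = 0" "1 \<le> k" "k \<le> j" "j \<le> nn D"
  shows "evidence j = 0"
  using assms(3,4)
proof (induction j rule: dec_induct)
  case (step m)
  then show ?case using evidence_Suc_labels[of m] label_lik_eq_0_if_evidence assms(2) by simp
qed (use assms in simp)

end

section \<open>The observed-data likelihood\<close>

locale retas_likelihood = retas_sample +
  assumes tau_T: "tt D (nn D) \<le> TT D"
    and J_nonneg: "\<And>x. 0 \<le> JJ P x"
    and lik_pos: "0 < obsLik P D Sp"
begin

lemma obsLik_eq: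
  "obsLik P D Sp = ((\<Prod>l = 1..nn D. JJ P (mm D l)) * exp (- Phi P D Sp (TT D) (nn D)))
    * (\<Sum>A\<in>labels (nn D). label_lik (nn D) (TT D) A)"
  unfolding obsLik_def Lcomp_eq_label_lik sum_distrib_left ..

lemma J_pos: "l \<in> {1..nn D} \<Longrightarrow> 0 < JJ P (mm D l)"
proof -
  assume l: "l \<in> {1..nn D}"
  have "(\<Prod>l = 1..nn D. JJ P (mm D l)) \<noteq> 0"
  proof
    assume zero: "(\<Prod>l = 1..nn D. JJ P (mm D l)) = 0"
    show False using lik_pos unfolding obsLik_eq zero by simp
  qed
  then have "JJ P (mm D l) \<noteq> 0" using l by (simp add: prod_zero_iff)
  then show ?thesis using J_nonneg by (simp add: less_le)
qed

lemma prod_J_pos: "k \<le> nn D \<Longrightarrow> 0 < (\<Prod>l = 1..k. JJ P (mm D l))"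
  using J_pos by (intro prod_pos) auto

lemma sum_label_lik_TT:
  "(\<Sum>A\<in>labels (nn D). label_lik (nn D) (TT D) A) = (\<Sum>j = 1..nn D. Send P D j * forward (nn D) j)"
  using label_lik_TT tau_T unfolding sum_labels_by_Max[symmetric] forward_def
  by (intro sum.cong) auto

lemma evidence_pos:
  assumes "1 \<le> k" "k \<le> nn D"
  shows "0 < evidence k"
proof -
  have "evidence (nn D) \<noteq> 0"
    using lik_pos label_lik_eq_0_if_evidence[of "nn D"] unfolding obsLik_eq by auto
  then have "evidence k \<noteq> 0" using evidence_eq_0_propagates[of k "nn D"] assms by blast
  then show ?thesis using evidence_nonneg[OF assms(2)] by simp
qed

lemma pp_eq_forward:
  assumes "1 \<le> k" "k \<le> nn D"
  shows "pp P D Sp (Suc k) j = forward k j / evidence k"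
proof -
  have "(\<Prod>l = 1..k. JJ P (mm D l)) \<noteq> 0" using prod_J_pos assms(2) by (simp add: less_le)
  then show ?thesis
    unfolding pp_def diff_Suc_1 Lcomp_eq_label_lik sum_distrib_left[symmetric] forward_def evidence_def
    by simp
qed

lemma sum_pp: "1 \<le> k \<Longrightarrow> k \<le> nn D \<Longrightarrow> (\<Sum>j = 1..k. pp P D Sp (Suc k) j) = 1"
  using evidence_pos[of k] by (simp add: pp_eq_forward evidence_eq_sum_forward sum_divide_distrib[symmetric])

lemma sum_pp_dd:
  assumes "2 \<le> i" "i \<le> nn D"
  shows "(\<Sum>j = 1..i - 1. pp P D Sp i j * dd P D i j) = evidence i / evidence (i - 1)"
proof -
  define m where "m = i - 1"
  have i: "i = Suc m" "1 \<le> m" "Suc m \<le> nn D" using assms by (auto simp: m_def)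
  have "(\<Sum>j = 1..m. pp P D Sp (Suc m) j * dd P D (Suc m) j)
      = (\<Sum>j = 1..m. dd P D (Suc m) j * forward m j / evidence m)"
    using pp_eq_forward[of m] i by (intro sum.cong) auto
  also have "\<dots> = evidence (Suc m) / evidence m"
    unfolding evidence_Suc[OF i(2,3)] sum_divide_distrib ..
  finally show ?thesis unfolding i(1) diff_Suc_1 .
qed

lemma sum_pp_Send:
  "(\<Sum>j = 1..nn D. pp P D Sp (nn D + 1) j * Send P D j)
    = (\<Sum>A\<in>labels (nn D). label_lik (nn D) (TT D) A) / evidence (nn D)"
proof -
  have "(\<Sum>j = 1..nn D. pp P D Sp (nn D + 1) j * Send P D j)
      = (\<Sum>j = 1..nn D. Send P D j * forward (nn D) j / evidence (nn D))"
    using pp_eq_forward[of "nn D"] n_pos by (intro sum.cong) auto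
  then show ?thesis unfolding sum_label_lik_TT sum_divide_distrib .
qed

lemma loglik_eq:
  "loglik P D Sp =
     ln (d1 P D)
   + (\<Sum>i = 2..nn D. ln (\<Sum>j = 1..i - 1. pp P D Sp i j * dd P D i j))
   + ln (\<Sum>j = 1..nn D. pp P D Sp (nn D + 1) j * Send P D j)
   - Phi P D Sp (TT D) (nn D)
   + (\<Sum>j = 1..nn D. ln (JJ P (mm D j)))"
proof -
  define R where "R = (\<Sum>A\<in>labels (nn D). label_lik (nn D) (TT D) A)"
  define J where "J = (\<Prod>l = 1..nn D. JJ P (mm D l))"
  have "0 < J" unfolding J_def by (rule prod_J_pos) simp
  then have J_exp: "0 < J * exp (- Phi P D Sp (TT D) (nn D))" by simp
  have R: "0 < R"
    using zero_less_mult_pos[OF lik_pos[unfolded obsLik_eq R_def[symmetric] J_def[symmetric]] J_exp] .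
  have Y: "0 < evidence (nn D)" using evidence_pos n_pos by simp
  have "loglik P D Sp = ln J - Phi P D Sp (TT D) (nn D) + ln (evidence (nn D)) + ln (R / evidence (nn D))"
    using \<open>0 < J\<close> R Y unfolding loglik_def obsLik_eq R_def[symmetric] J_def[symmetric]
    by (simp add: ln_mult ln_divide_pos)
  also have "ln J = (\<Sum>j = 1..nn D. ln (JJ P (mm D j)))"
    unfolding J_def using J_pos by (intro ln_prod) (simp_all add: less_imp_neq[symmetric])
  also have "ln (evidence (nn D)) = ln (d1 P D) + (\<Sum>i = 2..nn D. ln (evidence i / evidence (i - 1)))"
    using ln_telescope[where Y = evidence, OF n_pos evidence_pos] evidence_1 by simp
  also have "(\<Sum>i = 2..nn D. ln (evidence i / evidence (i - 1)))
      = (\<Sum>i = 2..nn D. ln (\<Sum>j = 1..i - 1. pp P D Sp i j * dd P D i j))"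
    using sum_pp_dd by (intro sum.cong) auto
  also have "R / evidence (nn D) = (\<Sum>j = 1..nn D. pp P D Sp (nn D + 1) j * Send P D j)"
    unfolding sum_pp_Send R_def ..
  finally show ?thesis by simp
qed

lemma pp_recursion:
  assumes "3 \<le> i" "i \<le> nn D + 1" "1 \<le> j" "j \<le> i - 2"
  shows "pp P D Sp i j =
           pp P D Sp (i - 1) j * phi P D (tt D (i - 1)) (ss D (i - 1)) * Ssurv P D (i - 1) j
           / (\<Sum>k = 1..i - 2. pp P D Sp (i - 1) k * dd P D (i - 1) k)"
proof -
  define m where "m = i - 2"
  have i: "i = Suc (Suc m)" "1 \<le> m" "Suc m \<le> nn D" "j \<le> m"
    using assms by (auto simp: m_def)
  have Y: "0 < evidence m" "0 < evidence (Suc m)" using evidence_pos i by auto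
  have "pp P D Sp i j = phi P D (tt D (Suc m)) (ss D (Suc m)) * Ssurv P D (Suc m) j * forward m j
      / evidence (Suc m)"
    using pp_eq_forward[of "Suc m" j] forward_Suc[OF i(2,3,4)] i by simp
  also have "\<dots> = (forward m j / evidence m) * phi P D (tt D (Suc m)) (ss D (Suc m))
      * Ssurv P D (Suc m) j / (evidence (Suc m) / evidence m)"
    using Y by (simp add: field_simps)
  also have "\<dots> = pp P D Sp (Suc m) j * phi P D (tt D (Suc m)) (ss D (Suc m)) * Ssurv P D (Suc m) j
      / (\<Sum>k = 1..m. pp P D Sp (Suc m) k * dd P D (Suc m) k)"
    using sum_pp_dd[of "Suc m"] pp_eq_forward[of m j] i by simp
  finally show ?thesis unfolding i(1) by simp
qed

lemma pp_last:
  assumes "3 \<le> i" "i \<le> nn D + 1"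
  shows "pp P D Sp i (i - 1) = 1 - (\<Sum>k = 1..i - 2. pp P D Sp i k)"
proof -
  define m where "m = i - 2"
  have i: "i = Suc (Suc m)" "1 \<le> Suc m" "Suc m \<le> nn D"
    using assms by (auto simp: m_def)
  then show ?thesis using sum_pp[of "Suc m"] by (simp add: sum.cl_ivl_Suc)
qed

end

theorem theorem1:
  fixes P :: retas_model and D :: retas_data
    and Sp :: "(real \<times> real) set" and Mg :: "real set"
  assumes n_pos: "1 \<le> nn D"
    and tau0: "tt D 0 = 0"
    and tau1_pos: "0 < tt D 1"
    and tau_mono: "\<And>i. 1 \<le> i \<Longrightarrow> i < nn D \<Longrightarrow> tt D i < tt D (Suc i)"
    and tau_T: "tt D (nn D) \<le> TT D"
    and s_in: "\<And>i. 1 \<le> i \<Longrightarrow> i \<le> nn D \<Longrightarrow> ss D i \<in> Sp"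
    and m_in: "\<And>i. 1 \<le> i \<Longrightarrow> i \<le> nn D \<Longrightarrow> mm D i \<in> Mg"
    and mu_nonneg: "\<And>t. 0 \<le> t \<Longrightarrow> 0 \<le> mu P t"
    and mu_locint: "\<And>b. mu P integrable_on {0..b}"
    and mu_renewal: "(\<lambda>t. exp (- integral {0..t} (mu P))) integrable_on {0..}"
    and nu_nonneg: "\<And>p. p \<in> Sp \<Longrightarrow> 0 \<le> nu P p"
    and nu_dens: "(nu P has_integral 1) Sp"
    and g_nonneg: "\<And>t. 0 \<le> t \<Longrightarrow> 0 \<le> gg P t"
    and g_dens: "(gg P has_integral 1) {0..}"
    and f_nonneg: "\<And>p. 0 \<le> ff P p"
    and f_dens: "(ff P has_integral 1) UNIV"
    and kappa_nonneg: "\<And>x. 0 \<le> kap P x"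
    and J_nonneg: "\<And>x. 0 \<le> JJ P x"
    and J_dens: "(JJ P has_integral 1) Mg"
    and lik_pos: "0 < obsLik P D Sp"
  shows "loglik P D Sp =
           ln (d1 P D)
         + (\<Sum>i = 2..nn D. ln (\<Sum>j = 1..i - 1. pp P D Sp i j * dd P D i j))
         + ln (\<Sum>j = 1..nn D. pp P D Sp (nn D + 1) j * Send P D j)
         - Phi P D Sp (TT D) (nn D)
         + (\<Sum>j = 1..nn D. ln (JJ P (mm D j)))
    \<and> pp P D Sp 2 1 = 1
    \<and> (\<forall>i j. 3 \<le> i \<longrightarrow> i \<le> nn D + 1 \<longrightarrow> 1 \<le> j \<longrightarrow> j \<le> i - 2 \<longrightarrow>
           pp P D Sp i j =
             pp P D Sp (i - 1) j * phi P D (tt D (i - 1)) (ss D (i - 1)) * Ssurv P D (i - 1) j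
             / (\<Sum>k = 1..i - 2. pp P D Sp (i - 1) k * dd P D (i - 1) k))
    \<and> (\<forall>i. 3 \<le> i \<longrightarrow> i \<le> nn D + 1 \<longrightarrow>
           pp P D Sp i (i - 1) = 1 - (\<Sum>k = 1..i - 2. pp P D Sp i k))"
proof -
  interpret retas_likelihood P D Sp
    using assms by unfold_locales auto
  have pp_2_1: "pp P D Sp 2 1 = 1"
    using sum_pp[OF order.refl n_pos] by (simp add: numeral_2_eq_2)
  show ?thesis
    by (intro conjI allI impI loglik_eq pp_2_1 pp_recursion pp_last; assumption)
qed

end
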